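(* Let $n\ge 2$, inputs $s_j\in\mathbb{Z}_{c_j}$, outputs $m_j\in\mathbb{Z}_d$ with $d$ prime, and let $F:\mathbb{Z}_{c_1}\times\cdots\times\mathbb{Z}_{c_n}\to\mathbb{Z}_d$ be any function. Then the set of non-signalling distributions $p(\mathbf{m}|\mathbf{s})$ whose correlator equals the deterministic correlator $p(k|\mathbf{s})=\delta^k_{F(\mathbf{s})}$ (a vertex of $\mathcal{P}$) is a face of the non-signalling polytope $\mathcal{NS}$.
   Context: Correlator of $p(\mathbf{m}|\mathbf{s})$: $p(k|\mathbf{s})=\sum_{\mathbf{m}:[\sum_j m_j]_d=k}p(\mathbf{m}|\mathbf{s})$, $[\cdot]_d$ reduction mod $d$. $\mathcal{P}$ is the convex polytope of all correlator families, with vertices the deterministic correlators $\delta^k_{F(\mathbf{s})}$. Non-signalling: for every subset $\mathcal{J}$ and inputs $\mathbf{s},\mathbf{s}'$ agreeing outside $\mathcal{J}$, $\sum_{(m_j)_{j\in\mathcal{J}}}p(\mathbf{m}|\mathbf{s})=\sum_{(m_j)_{j\in\mathcal{J}}}p(\mathbf{m}|\mathbf{s}')$. $\mathcal{NS}$ is the convex polytope of all non-signalling conditional distributions (nonnegative, normalised for each $\mathbf{s}$), viewed as vectors in a real space; a face is meant in the sense of convex polytopes. *)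

theory Defs
  imports "HOL-Analysis.Analysis" "HOL-Library.Function_Algebras"
begin

(* Pointwise real vector space structure on functions (needed to speak of
   faces, in the sense of convex sets/polytopes, via the library notion face_of). *)
instantiation "fun" :: (type, real_vector) real_vector
begin
definition scaleR_fun :: "real \<Rightarrow> ('a \<Rightarrow> 'b) \<Rightarrow> 'a \<Rightarrow> 'b"
  where "scaleR_fun r f = (\<lambda>x. r *\<^sub>R f x)"
instance
  by standard (auto simp: scaleR_fun_def fun_eq_iff scaleR_add_right scaleR_add_left)
end

definition inputs :: "nat \<Rightarrow> (nat \<Rightarrow> nat) \<Rightarrow> (nat \<Rightarrow> nat) set" where
  "inputs n c = PiE {..<n} (\<lambda>j. {..<c j})"

definition outputs :: "nat \<Rightarrow> nat \<Rightarrow> (nat \<Rightarrow> nat) set" where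
  "outputs n d = PiE {..<n} (\<lambda>j. {..<d})"

type_synonym behaviour = "(nat \<Rightarrow> nat) \<Rightarrow> (nat \<Rightarrow> nat) \<Rightarrow> real"
  (* p s m = p(m|s) *)

definition cond_dists :: "nat \<Rightarrow> (nat \<Rightarrow> nat) \<Rightarrow> nat \<Rightarrow> behaviour set" where
  "cond_dists n c d = {p.
     (\<forall>s m. 0 \<le> p s m) \<and>
     (\<forall>s m. \<not> (s \<in> inputs n c \<and> m \<in> outputs n d) \<longrightarrow> p s m = 0) \<and>
     (\<forall>s \<in> inputs n c. (\<Sum>m \<in> outputs n d. p s m) = 1)}"

definition non_signalling :: "nat \<Rightarrow> (nat \<Rightarrow> nat) \<Rightarrow> nat \<Rightarrow> behaviour \<Rightarrow> bool" where
  "non_signalling n c d p \<longleftrightarrow>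
     (\<forall>J \<subseteq> {..<n}. \<forall>s \<in> inputs n c. \<forall>s' \<in> inputs n c.
        (\<forall>j \<in> {..<n} - J. s j = s' j) \<longrightarrow>
        (\<forall>m \<in> outputs n d.
           (\<Sum>m' \<in> {m' \<in> outputs n d. \<forall>j \<in> {..<n} - J. m' j = m j}. p s m') =
           (\<Sum>m' \<in> {m' \<in> outputs n d. \<forall>j \<in> {..<n} - J. m' j = m j}. p s' m')))"

definition NS :: "nat \<Rightarrow> (nat \<Rightarrow> nat) \<Rightarrow> nat \<Rightarrow> behaviour set" where
  "NS n c d = {p \<in> cond_dists n c d. non_signalling n c d p}"

definition correlator :: "nat \<Rightarrow> nat \<Rightarrow> behaviour \<Rightarrow> (nat \<Rightarrow> nat) \<Rightarrow> nat \<Rightarrow> real" where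
  "correlator n d p s k = (\<Sum>m \<in> {m \<in> outputs n d. (\<Sum>j<n. m j) mod d = k}. p s m)"

end

theory Submission
  imports Defs
begin

text \<open>On \<open>NS\<close> every correlator value \<open>p(k|s)\<close> is a linear functional of \<open>p\<close>
  taking values in \<open>[0, 1]\<close>. Prescribing it to be \<open>1\<close> (for \<open>k = F s\<close>) or \<open>0\<close> (otherwise) fixes it
  at its maximum or minimum over \<open>NS\<close>, which cuts out a face; the set in question is the
  intersection of these finitely many faces.\<close>

lemma face_of_linear_level_le:
  fixes f :: "'a::real_vector \<Rightarrow> real"
  assumes "convex S" and "linear f" and le: "\<And>x. x \<in> S \<Longrightarrow> f x \<le> b"
  shows "{x \<in> S. f x = b} face_of S"
  unfolding face_of_def
proof (intro conjI ballI impI)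
  show "convex {x \<in> S. f x = b}"
    using \<open>convex S\<close> unfolding convex_def
    by (auto simp: linear_add[OF \<open>linear f\<close>] linear_scale[OF \<open>linear f\<close>] distrib_right[symmetric])
next
  fix y z x
  assume y: "y \<in> S" and z: "z \<in> S" and x: "x \<in> {x \<in> S. f x = b}" and "x \<in> open_segment y z"
  then obtain u where u: "0 < u" "u < 1" and "x = (1 - u) *\<^sub>R y + u *\<^sub>R z"
    by (auto simp: in_segment)
  then have "(1 - u) * f y + u * f z = b"
    using x by (simp add: linear_add[OF \<open>linear f\<close>] linear_scale[OF \<open>linear f\<close>])
  moreover have "(1 - u) * f y \<le> (1 - u) * b" "u * f z \<le> u * b"
    using le[OF y] le[OF z] u by simp_all
  moreover have "(1 - u) * b + u * b = b"
    by (simp add: algebra_simps)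
  ultimately have "(1 - u) * f y = (1 - u) * b" "u * f z = u * b"
    by linarith+
  then show "y \<in> {x \<in> S. f x = b}" "z \<in> {x \<in> S. f x = b}"
    using y z u by simp_all
qed auto

lemma face_of_linear_level_ge:
  fixes f :: "'a::real_vector \<Rightarrow> real"
  assumes "convex S" and "linear f" and "\<And>x. x \<in> S \<Longrightarrow> b \<le> f x"
  shows "{x \<in> S. f x = b} face_of S"
  using face_of_linear_level_le[of S "\<lambda>x. - f x" "- b"] assms
  by (simp add: linear_compose_neg)

lemma sum_behaviour_combination:
  "(\<Sum>m\<in>A. (u *\<^sub>R (p::behaviour) + v *\<^sub>R q) s m) = u * (\<Sum>m\<in>A. p s m) + v * (\<Sum>m\<in>A. q s m)"
  by (simp add: scaleR_fun_def sum.distrib sum_distrib_left)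

lemma linear_correlator: "linear (\<lambda>p. correlator n d p s k)"
  by (rule linearI) (simp_all add: correlator_def scaleR_fun_def sum.distrib sum_distrib_left)

lemma cond_dists_combination:
  assumes p: "p \<in> cond_dists n c d" and q: "q \<in> cond_dists n c d"
    and uv: "0 \<le> u" "0 \<le> v" "u + v = 1"
  shows "u *\<^sub>R p + v *\<^sub>R q \<in> cond_dists n c d"
  unfolding cond_dists_def
proof (intro CollectI conjI allI ballI impI)
  fix s m
  have "0 \<le> p s m" "0 \<le> q s m"
    using p q by (simp_all add: cond_dists_def)
  then show "0 \<le> (u *\<^sub>R p + v *\<^sub>R q) s m"
    using uv by (simp add: scaleR_fun_def)
  assume "\<not> (s \<in> inputs n c \<and> m \<in> outputs n d)"
  then have "p s m = 0" "q s m = 0"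
    using p q by (simp_all add: cond_dists_def)
  then show "(u *\<^sub>R p + v *\<^sub>R q) s m = 0"
    by (simp add: scaleR_fun_def)
next
  fix s
  assume "s \<in> inputs n c"
  then have "(\<Sum>m \<in> outputs n d. p s m) = 1" "(\<Sum>m \<in> outputs n d. q s m) = 1"
    using p q by (simp_all add: cond_dists_def)
  then show "(\<Sum>m \<in> outputs n d. (u *\<^sub>R p + v *\<^sub>R q) s m) = 1"
    unfolding sum_behaviour_combination using uv by simp
qed

lemma non_signalling_combination:
  assumes p: "non_signalling n c d p" and q: "non_signalling n c d q"
  shows "non_signalling n c d (u *\<^sub>R p + v *\<^sub>R q)"
  unfolding non_signalling_def sum_behaviour_combination
proof (intro allI impI ballI)
  fix J s s' m
  assume hyps: "J \<subseteq> {..<n}" "s \<in> inputs n c" "s' \<in> inputs n c"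
    "\<forall>j \<in> {..<n} - J. s j = s' j" "m \<in> outputs n d"
  define M where "M = {m' \<in> outputs n d. \<forall>j \<in> {..<n} - J. m' j = m j}"
  have "sum (p s) M = sum (p s') M" "sum (q s) M = sum (q s') M"
    using p[unfolded non_signalling_def, rule_format, of J s s' m]
      q[unfolded non_signalling_def, rule_format, of J s s' m] hyps
    unfolding M_def by blast+
  then show "u * sum (p s) M + v * sum (q s) M = u * sum (p s') M + v * sum (q s') M"
    by simp
qed

lemma convex_NS: "convex (NS n c d)"
  unfolding convex_def NS_def
  using cond_dists_combination non_signalling_combination by blast

lemma correlator_nonneg: "p \<in> NS n c d \<Longrightarrow> 0 \<le> correlator n d p s k"
  unfolding correlator_def NS_def cond_dists_def by (auto intro: sum_nonneg)

lemma correlator_le_1: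
  assumes p: "p \<in> NS n c d" and s: "s \<in> inputs n c"
  shows "correlator n d p s k \<le> 1"
proof -
  have "finite (outputs n d)"
    unfolding outputs_def by (rule finite_PiE) auto
  then have "correlator n d p s k \<le> (\<Sum>m \<in> outputs n d. p s m)"
    unfolding correlator_def
    by (rule sum_mono2) (use p in \<open>auto simp: NS_def cond_dists_def\<close>)
  also have "\<dots> = 1"
    using p s by (auto simp: NS_def cond_dists_def)
  finally show ?thesis .
qed

lemma face_of_NS_correlator_fixed:
  assumes "s \<in> inputs n c"
  shows "{p \<in> NS n c d. correlator n d p s k = (if k = F s then 1 else 0)} face_of NS n c d"
  using assms convex_NS linear_correlator correlator_le_1 correlator_nonneg
  by (cases "k = F s") (simp_all add: face_of_linear_level_le face_of_linear_level_ge)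

theorem proposition2p3p1:
  fixes n d :: nat and c :: "nat \<Rightarrow> nat" and F :: "(nat \<Rightarrow> nat) \<Rightarrow> nat"
  assumes "n \<ge> 2"
    and "prime d"
    and "\<forall>s \<in> inputs n c. F s < d"
  shows "{p \<in> NS n c d. \<forall>s \<in> inputs n c. \<forall>k < d.
            correlator n d p s k = (if k = F s then 1 else 0)} face_of NS n c d"
proof -
  let ?face = "\<lambda>(s, k). {p \<in> NS n c d. correlator n d p s k = (if k = F s then 1 else 0)}"
  have "{p \<in> NS n c d. \<forall>s \<in> inputs n c. \<forall>k < d.
            correlator n d p s k = (if k = F s then 1 else 0)}
        = \<Inter> (insert (NS n c d) (?face ` (inputs n c \<times> {..<d})))"
    by auto
  also have "\<dots> face_of NS n c d"
    \<comment> \<open>\<open>NS\<close> itself is included so that the family is nonempty even if there are no inputs.\<close>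
    by (rule face_of_Inter)
      (auto simp: face_of_refl convex_NS face_of_NS_correlator_fixed)
  finally show ?thesis .
qed

end
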